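(* Let $\lambda>0$, $\ell>0$, $a_1,a_2,a_3\in\mathbb{R}$, fix $z>0$, and consider the map $(x_0,y_0)\mapsto(x,y)$ given by $$x=x_0+\frac{\lambda z}{2\pi\ell}\left(a_1+2a_3\frac{x_0}{\ell}+2\frac{x_0y_0}{\ell^2}\right),\qquad y=y_0+\frac{\lambda z}{2\pi\ell}\left(a_2+\frac{3y_0^2+x_0^2}{\ell^2}\right).$$ Let $A\doteq a_3+\frac{2\pi\ell^2}{3\lambda z}$ and assume $A\neq0$. Then the set of caustic points of this map (points $(x,y)$ that are images of some $(x_0,y_0)$ at which the Jacobian determinant $\det\partial(x,y)/\partial(x_0,y_0)$ vanishes) is the union, over the two choices of sign, of the curves $\zeta\in\mathbb{R}\mapsto(x_c(\zeta),y_c(\zeta))$ with $$x_c(\zeta)=a_1\frac{\lambda z}{2\pi\ell}-\frac{\sqrt3\,\lambda z}{4\pi\ell}A^2\sinh(\zeta)\left[\cosh(\zeta)\pm1\right],$$ $$y_c(\zeta)=a_2\frac{\lambda z}{2\pi\ell}-\frac{\pi\ell^3}{6\lambda z}+\frac{3\lambda z}{4\pi\ell}A^2\cosh(\zeta)\left[\cosh(\zeta)\mp1\right].$$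
   Context: In the formulas for $x_c$ and $y_c$, the upper signs are taken together and the lower signs are taken together. *)

theory Defs
  imports "HOL-Analysis.Analysis"
begin

definition propmap :: "real \<Rightarrow> real \<Rightarrow> real \<Rightarrow> real \<Rightarrow> real \<Rightarrow> real \<Rightarrow> real \<times> real \<Rightarrow> real \<times> real" where
  "propmap lam l a1 a2 a3 z = (\<lambda>(x0, y0).
     (x0 + lam * z / (2 * pi * l) * (a1 + 2 * a3 * x0 / l + 2 * x0 * y0 / l^2),
      y0 + lam * z / (2 * pi * l) * (a2 + (3 * y0^2 + x0^2) / l^2)))"

definition jacdet :: "(real \<times> real \<Rightarrow> real \<times> real) \<Rightarrow> real \<times> real \<Rightarrow> real" where
  "jacdet F p =
     deriv (\<lambda>t. fst (F (t, snd p))) (fst p) * deriv (\<lambda>t. snd (F (fst p, t))) (snd p)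
   - deriv (\<lambda>t. fst (F (fst p, t))) (snd p) * deriv (\<lambda>t. snd (F (t, snd p))) (fst p)"

definition caustic :: "(real \<times> real \<Rightarrow> real \<times> real) \<Rightarrow> (real \<times> real) set" where
  "caustic F = {F p | p. jacdet F p = 0}"

text \<open>The caustic curves; s = 1 gives the upper signs, s = -1 the lower signs.\<close>
definition xc :: "real \<Rightarrow> real \<Rightarrow> real \<Rightarrow> real \<Rightarrow> real \<Rightarrow> real \<Rightarrow> real \<Rightarrow> real" where
  "xc lam l a1 a3 z s \<zeta> =
     (let A = a3 + 2 * pi * l^2 / (3 * lam * z) in
      a1 * lam * z / (2 * pi * l)
      - sqrt 3 * lam * z / (4 * pi * l) * A^2 * sinh \<zeta> * (cosh \<zeta> + s))"

definition yc :: "real \<Rightarrow> real \<Rightarrow> real \<Rightarrow> real \<Rightarrow> real \<Rightarrow> real \<Rightarrow> real \<Rightarrow> real" where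
  "yc lam l a2 a3 z s \<zeta> =
     (let A = a3 + 2 * pi * l^2 / (3 * lam * z) in
      a2 * lam * z / (2 * pi * l) - pi * l^3 / (6 * lam * z)
      + 3 * lam * z / (4 * pi * l) * A^2 * cosh \<zeta> * (cosh \<zeta> - s))"

end

theory Submission
  imports Defs
begin

text \<open>In the rescaled and shifted coordinates \<open>x\<^sub>0 = \<ell> u\<close>, \<open>y\<^sub>0 = \<ell> (w - B/2)\<close>, where
  \<open>B = 2\<pi>\<ell>\<^sup>2/(3\<lambda>z)\<close>, the Jacobian of the map vanishes exactly on the hyperbola
  \<open>u\<^sup>2 = 3 w (w + A)\<close>. Since \<open>A \<noteq> 0\<close> this is a non-degenerate hyperbola, whose two branches are
  parametrised by \<open>\<plusminus>(cosh \<zeta>, sinh \<zeta>)\<close> after an affine change of variables; pushing these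
  branches through the map gives the two caustic curves.\<close>

lemma unit_hyperbola_param:
  fixes p q :: real
  shows "p\<^sup>2 - q\<^sup>2 = 1 \<longleftrightarrow> (\<exists>s\<in>{1, -1}. \<exists>\<zeta>. p = s * cosh \<zeta> \<and> q = s * sinh \<zeta>)"
proof
  assume hyp: "p\<^sup>2 - q\<^sup>2 = 1"
  define s :: real where "s = (if p \<ge> 0 then 1 else -1)"
  have s_sq: "s\<^sup>2 = 1" by (simp add: s_def)
  have "cosh (arsinh (s * q)) = sqrt ((s * q)\<^sup>2 + 1)"
    by (simp add: cosh_arsinh_real add.commute)
  also have "\<dots> = \<bar>p\<bar>"
    using hyp s_sq by (simp add: power_mult_distrib add.commute flip: real_sqrt_abs)
  also have "\<dots> = s * p" by (simp add: s_def)
  finally have "p = s * cosh (arsinh (s * q))" using s_sq by (simp add: power2_eq_square)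
  moreover have "q = s * sinh (arsinh (s * q))" using s_sq by (simp add: power2_eq_square)
  moreover have "s \<in> {1, -1}" by (simp add: s_def)
  ultimately show "\<exists>s\<in>{1, -1}. \<exists>\<zeta>. p = s * cosh \<zeta> \<and> q = s * sinh \<zeta>" by blast
next
  assume "\<exists>s\<in>{1, -1}. \<exists>\<zeta>. p = s * cosh \<zeta> \<and> q = s * sinh \<zeta>"
  then obtain s \<zeta> where s: "s \<in> {1, -1}" and "p = s * cosh \<zeta>" "q = s * sinh \<zeta>"
    by blast
  moreover from s have "s\<^sup>2 = 1" by auto
  ultimately show "p\<^sup>2 - q\<^sup>2 = 1" by (simp add: power_mult_distrib cosh_square_eq flip: right_diff_distrib)
qed

lemma hyperbola_param:
  fixes A :: real
  assumes "A \<noteq> 0"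
  shows "{(u, w). u\<^sup>2 = 3 * w * (w + A)} =
    (\<Union>s\<in>{1, -1}. range (\<lambda>\<zeta>. (- (sqrt 3 * A / 2) * s * sinh \<zeta>, A / 2 * (s * cosh \<zeta> - 1))))"
proof -
  have "u\<^sup>2 = 3 * w * (w + A) \<longleftrightarrow>
    (\<exists>s\<in>{1, -1}. \<exists>\<zeta>. u = - (sqrt 3 * A / 2) * s * sinh \<zeta> \<and> w = A / 2 * (s * cosh \<zeta> - 1))"
    for u w :: real
  proof -
    have "u\<^sup>2 = 3 * w * (w + A) \<longleftrightarrow> ((2 * w + A) / A)\<^sup>2 - (- 2 * u / (sqrt 3 * A))\<^sup>2 = 1"
      using assms by (auto simp: power_divide power_mult_distrib field_simps) (auto simp: algebra_simps power2_eq_square)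
    also have "\<dots> \<longleftrightarrow> (\<exists>s\<in>{1, -1}. \<exists>\<zeta>. (2 * w + A) / A = s * cosh \<zeta> \<and> - 2 * u / (sqrt 3 * A) = s * sinh \<zeta>)"
      by (rule unit_hyperbola_param)
    also have "\<dots> \<longleftrightarrow> (\<exists>s\<in>{1, -1}. \<exists>\<zeta>. u = - (sqrt 3 * A / 2) * s * sinh \<zeta> \<and> w = A / 2 * (s * cosh \<zeta> - 1))"
      using assms by (intro bex_cong ex_cong1) (auto simp: field_simps)
    finally show ?thesis .
  qed
  then show ?thesis
    by (auto simp: image_iff)
qed

lemma hyperbola_branch_image:
  fixes A c s \<zeta> :: real
  assumes "s \<in> {1, -1}"
  defines "u \<equiv> - (sqrt 3 * A / 2) * s * sinh \<zeta>" and "w \<equiv> A / 2 * (s * cosh \<zeta> - 1)"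
  shows "2 * c * u * (w + A) = - (sqrt 3 * c / 2 * A\<^sup>2 * sinh \<zeta> * (cosh \<zeta> + s))"
    and "c * (3 * w\<^sup>2 + u\<^sup>2) = 3 * c / 2 * A\<^sup>2 * cosh \<zeta> * (cosh \<zeta> - s)"
proof -
  show "2 * c * u * (w + A) = - (sqrt 3 * c / 2 * A\<^sup>2 * sinh \<zeta> * (cosh \<zeta> + s))"
    using assms unfolding u_def w_def by (auto simp: power2_eq_square field_simps)
  have u_sq: "u\<^sup>2 = 3 / 4 * A\<^sup>2 * ((cosh \<zeta>)\<^sup>2 - 1)"
    using assms unfolding u_def by (auto simp: power_mult_distrib power_divide sinh_square_eq)
  show "c * (3 * w\<^sup>2 + u\<^sup>2) = 3 * c / 2 * A\<^sup>2 * cosh \<zeta> * (cosh \<zeta> - s)"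
    unfolding u_sq using assms unfolding w_def by (auto simp: power2_eq_square field_simps)
qed

locale caustic_setup =
  fixes lam l a1 a2 a3 z :: real
  assumes lam_pos: "lam > 0" and l_pos: "l > 0" and z_pos: "z > 0"
begin

abbreviation "F \<equiv> propmap lam l a1 a2 a3 z"
abbreviation "c \<equiv> lam * z / (2 * pi * l)"
abbreviation "B \<equiv> 2 * pi * l\<^sup>2 / (3 * lam * z)"
abbreviation "A \<equiv> a3 + B"

lemma jacdet_propmap:
  "jacdet F (x0, y0) =
     (1 + c * (2 * a3 / l + 2 * y0 / l\<^sup>2)) * (1 + c * (6 * y0 / l\<^sup>2)) - (c * (2 * x0 / l\<^sup>2))\<^sup>2"
proof -
  have "deriv (\<lambda>t. fst (F (t, y0))) x0 = 1 + c * (2 * a3 / l + 2 * y0 / l\<^sup>2)"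
    unfolding propmap_def using l_pos
    by (intro DERIV_imp_deriv) (auto intro!: derivative_eq_intros simp: field_simps)
  moreover have "deriv (\<lambda>t. snd (F (x0, t))) y0 = 1 + c * (6 * y0 / l\<^sup>2)"
    unfolding propmap_def using l_pos
    by (intro DERIV_imp_deriv) (auto intro!: derivative_eq_intros simp: field_simps)
  moreover have "deriv (\<lambda>t. fst (F (x0, t))) y0 = c * (2 * x0 / l\<^sup>2)"
    unfolding propmap_def using l_pos
    by (intro DERIV_imp_deriv) (auto intro!: derivative_eq_intros simp: field_simps)
  moreover have "deriv (\<lambda>t. snd (F (t, y0))) x0 = c * (2 * x0 / l\<^sup>2)"
    unfolding propmap_def using l_pos
    by (intro DERIV_imp_deriv) (auto intro!: derivative_eq_intros simp: field_simps)
  ultimately show ?thesis unfolding jacdet_def by (simp add: power2_eq_square)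
qed

lemma jacdet_propmap_shifted:
  "jacdet F (l * u, l * (w - B / 2)) = 4 * (3 * w * (w + A) - u\<^sup>2) / (9 * B\<^sup>2)"
proof -
  have "c / l = 1 / (3 * B)"
    using lam_pos l_pos z_pos by (simp add: field_simps power2_eq_square)
  then show ?thesis
    unfolding jacdet_propmap using lam_pos l_pos z_pos
    by (simp add: field_simps power2_eq_square)
qed

lemma propmap_shifted:
  "F (l * u, l * (w - B / 2)) = (a1 * c + 2 * c * u * (w + A), a2 * c - l * B / 4 + c * (3 * w\<^sup>2 + u\<^sup>2))"
  unfolding propmap_def using lam_pos l_pos z_pos
  by (simp add: field_simps power2_eq_square)

lemma jacdet_propmap_zero_set:
  "{p. jacdet F p = 0} = (\<lambda>(u, w). (l * u, l * (w - B / 2))) ` {(u, w). u\<^sup>2 = 3 * w * (w + A)}"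
proof (intro set_eqI iffI)
  fix p :: "real \<times> real"
  assume "p \<in> {p. jacdet F p = 0}"
  moreover obtain x y where p: "p = (x, y)" by fastforce
  moreover have shift: "(l * (x / l), l * ((y / l + B / 2) - B / 2)) = (x, y)"
    using l_pos by simp
  ultimately have "jacdet F (l * (x / l), l * ((y / l + B / 2) - B / 2)) = 0"
    by simp
  then have "(x / l, y / l + B / 2) \<in> {(u, w). u\<^sup>2 = 3 * w * (w + A)}"
    unfolding jacdet_propmap_shifted using lam_pos l_pos z_pos by simp
  then show "p \<in> (\<lambda>(u, w). (l * u, l * (w - B / 2))) ` {(u, w). u\<^sup>2 = 3 * w * (w + A)}"
    unfolding p by (rule rev_image_eqI) (use shift in simp)
next
  fix p :: "real \<times> real"
  assume "p \<in> (\<lambda>(u, w). (l * u, l * (w - B / 2))) ` {(u, w). u\<^sup>2 = 3 * w * (w + A)}"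
  then obtain u w where "p = (l * u, l * (w - B / 2))" and "u\<^sup>2 = 3 * w * (w + A)"
    by auto
  then show "p \<in> {p. jacdet F p = 0}"
    by (simp only: mem_Collect_eq jacdet_propmap_shifted) simp
qed

lemma xc_eq: "xc lam l a1 a3 z s \<zeta> = a1 * c - sqrt 3 * c / 2 * A\<^sup>2 * sinh \<zeta> * (cosh \<zeta> + s)"
  unfolding xc_def Let_def by (simp add: field_simps)

lemma yc_eq: "yc lam l a2 a3 z s \<zeta> = a2 * c - l * B / 4 + 3 * c / 2 * A\<^sup>2 * cosh \<zeta> * (cosh \<zeta> - s)"
  unfolding yc_def Let_def using lam_pos l_pos z_pos
  by (simp add: field_simps power2_eq_square power3_eq_cube)

lemma propmap_on_branch:
  assumes "s \<in> {1, -1}"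
  shows "F (l * (- (sqrt 3 * A / 2) * s * sinh \<zeta>), l * (A / 2 * (s * cosh \<zeta> - 1) - B / 2)) =
    (xc lam l a1 a3 z s \<zeta>, yc lam l a2 a3 z s \<zeta>)"
  unfolding propmap_shifted xc_eq yc_eq hyperbola_branch_image[OF assms] by simp

end

theorem mainTheorem7:
  fixes lam l a1 a2 a3 z :: real
  assumes "lam > 0" and "l > 0" and "z > 0"
    and "a3 + 2 * pi * l^2 / (3 * lam * z) \<noteq> 0"
  shows "caustic (propmap lam l a1 a2 a3 z) =
    (\<Union>s\<in>{1, -1::real}. {(xc lam l a1 a3 z s \<zeta>, yc lam l a2 a3 z s \<zeta>) | \<zeta>. True})"
proof -
  interpret caustic_setup lam l a1 a2 a3 z
    using assms(1-3) by unfold_locales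
  have "caustic F = F ` {p. jacdet F p = 0}"
    unfolding caustic_def by blast
  also have "\<dots> = (\<Union>s\<in>{1, -1}. range (\<lambda>\<zeta>.
      F (l * (- (sqrt 3 * A / 2) * s * sinh \<zeta>), l * (A / 2 * (s * cosh \<zeta> - 1) - B / 2))))"
    unfolding jacdet_propmap_zero_set hyperbola_param[OF assms(4)]
      image_UN image_image by simp
  also have "\<dots> = (\<Union>s\<in>{1, -1}. range (\<lambda>\<zeta>. (xc lam l a1 a3 z s \<zeta>, yc lam l a2 a3 z s \<zeta>)))"
    by (intro SUP_cong refl) (simp only: propmap_on_branch)
  finally show ?thesis
    by (simp add: full_SetCompr_eq)
qed

end
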